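(* In the oligopoly game below, for all parameter values ($\alpha>0$, unit $\boldsymbol\beta$, $\boldsymbol\gamma$ with all entries positive) there exists at least one equilibrium of one of the following types: (a) an equilibrium with $\mathbf A^*\mathbf q^*=\boldsymbol\beta$ and $\mathbf q^*=\boldsymbol\gamma/(2+\alpha)$; (b) an equilibrium with $\mathbf a_i^*=\boldsymbol\beta$ for all $i$ (product concentration); (c) an equilibrium exhibiting dominant-firm polarization, i.e. $\mathbf a_i^*=\boldsymbol\beta$ for exactly one firm $i$, which satisfies $\gamma_i=\|\boldsymbol\gamma\|_\infty$, and $\mathbf a_j^*=-\boldsymbol\beta$ for all $j\ne i$. Moreover, every equilibrium $(\mathbf A^*,\mathbf q^* )$ is either of type (a), or satisfies $\mathbf a_i^*=\sigma_i\boldsymbol\beta$ for all $i$ for some $\boldsymbol\sigma\in\{-1,1\}^n$ (in which case $\boldsymbol\sigma$ satisfies $(2+\alpha)-\frac{2+(n+1)\alpha}{2(1+\alpha)}\min_{j:\sigma_j=-1}\gamma_j\le\boldsymbol\sigma^\top\boldsymbol\gamma\le(2+\alpha)+\frac{2+(n+1)\alpha}{2(1+\alpha)}\min_{j:\sigma_j=1}\gamma_j$, with $\min\emptyset=+\infty$, and $\mathbf q^*=\frac{\boldsymbol\gamma}{2+\alpha}-\frac{\alpha(\boldsymbol\sigma^\top\boldsymbol\gamma-(2+\alpha))}{(2+\alpha)(2+(n+1)\alpha)}\boldsymbol\sigma$).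
   Context: Model: integers $n\ge2$, $m\ge2$; $\alpha>0$, $\boldsymbol\beta\in\mathbb R^m$ with $\|\boldsymbol\beta\|_2=1$, $\boldsymbol\gamma\in\mathbb R^n$ with all $\gamma_i>0$. Firm $i$ chooses a unit vector $\mathbf a_i\in\mathbb R^m$ and $q_i\ge0$, earning $\Pi_i=\alpha q_i\mathbf a_i^\top(\boldsymbol\beta-\sum_{j\ne i}q_j\mathbf a_j)-(1+\alpha)q_i^2+\gamma_iq_i$. $\mathbf A=[\mathbf a_1,\dots,\mathbf a_n]$. An equilibrium is a profile $(\mathbf A^*,\mathbf q^* )$ in which each $(\mathbf a_i^*,q_i^* )$ maximizes $\Pi_i$ over unit $\mathbf a_i$ and $q_i\ge0$ given the others' choices. $\|\boldsymbol\gamma\|_\infty=\max_i\gamma_i$. *)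

theory Defs
  imports "HOL-Analysis.Analysis"
begin

text \<open>Firms are indexed by the finite type 'n (n = CARD('n)), product space is real^'m.
  A profile is A :: (real^'m)^'n (A $ i = a_i) and q :: real^'n.\<close>

definition profit :: "real \<Rightarrow> real^'m \<Rightarrow> real^'n \<Rightarrow> (real^'m)^'n \<Rightarrow> real^'n
    \<Rightarrow> 'n \<Rightarrow> real^'m \<Rightarrow> real \<Rightarrow> real" where
  "profit \<alpha> \<beta> \<gamma> A q i a x =
     \<alpha> * x * (a \<bullet> (\<beta> - (\<Sum>j\<in>UNIV - {i}. (q $ j) *\<^sub>R (A $ j))))
     - (1 + \<alpha>) * x\<^sup>2 + (\<gamma> $ i) * x"

definition equilibrium :: "real \<Rightarrow> real^'m \<Rightarrow> real^'n \<Rightarrow> (real^'m)^'n \<Rightarrow> real^'n \<Rightarrow> bool" where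
  "equilibrium \<alpha> \<beta> \<gamma> A q \<longleftrightarrow>
     (\<forall>i. norm (A $ i) = 1 \<and> q $ i \<ge> 0 \<and>
        (\<forall>a x. norm a = 1 \<longrightarrow> x \<ge> 0 \<longrightarrow>
           profit \<alpha> \<beta> \<gamma> A q i a x \<le> profit \<alpha> \<beta> \<gamma> A q i (A $ i) (q $ i)))"

definition Aq :: "(real^'m)^'n \<Rightarrow> real^'n \<Rightarrow> real^'m" where
  "Aq A q = (\<Sum>i\<in>UNIV. (q $ i) *\<^sub>R (A $ i))"

definition typeA :: "real \<Rightarrow> real^'m \<Rightarrow> real^'n \<Rightarrow> (real^'m)^'n \<Rightarrow> real^'n \<Rightarrow> bool" where
  "typeA \<alpha> \<beta> \<gamma> A q \<longleftrightarrow> Aq A q = \<beta> \<and> q = (1 / (2 + \<alpha>)) *\<^sub>R \<gamma>"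

definition typeB :: "real^'m \<Rightarrow> (real^'m)^'n \<Rightarrow> bool" where
  "typeB \<beta> A \<longleftrightarrow> (\<forall>i. A $ i = \<beta>)"

definition typeC :: "real^'m \<Rightarrow> real^'n \<Rightarrow> (real^'m)^'n \<Rightarrow> bool" where
  "typeC \<beta> \<gamma> A \<longleftrightarrow>
     (\<exists>i. A $ i = \<beta> \<and> \<gamma> $ i = Max (range (\<lambda>k. \<gamma> $ k)) \<and>
          (\<forall>j. j \<noteq> i \<longrightarrow> A $ j = - \<beta>))"

end

theory Submission
  imports Defs
begin

text \<open>
  Firm \<open>i\<close> faces the residual direction \<open>g\<^sub>i = \<beta> - (\<Sum>j\<noteq>i. q\<^sub>j a\<^sub>j)\<close>, and its profit is a
  concave quadratic in \<open>q\<^sub>i\<close> whose linear term \<open>\<alpha> q\<^sub>i a\<^sub>i \<bullet> g\<^sub>i\<close> is maximised by aligning \<open>a\<^sub>i\<close>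
  with \<open>g\<^sub>i\<close>; so best responses are \<open>g\<^sub>i = |g\<^sub>i| a\<^sub>i\<close> and \<open>2 (1 + \<alpha>) q\<^sub>i = \<alpha> |g\<^sub>i| + \<gamma>\<^sub>i\<close>.
  Hence \<open>\<beta> - A q = (|g\<^sub>i| - q\<^sub>i) a\<^sub>i\<close> for every \<open>i\<close>. Either \<open>A q = \<beta>\<close>, which forces
  \<open>|g\<^sub>i| = q\<^sub>i\<close> and \<open>q = \<gamma> / (2 + \<alpha>)\<close>, or all \<open>a\<^sub>i\<close> are \<open>\<plusminus>\<close> the direction of \<open>\<beta> - A q\<close>,
  and then \<open>\<beta>\<close> lies on that line too, so \<open>a\<^sub>i = \<sigma>\<^sub>i \<beta>\<close>. For such a sign profile every
  residual is a multiple of \<open>\<beta>\<close>: the equilibrium conditions become one linear system for \<open>q\<close>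
  plus one sign condition per firm, which solve to the stated formula and inequalities.

  For existence, let \<open>L = \<Sum>\<gamma>\<^sub>i\<close>. If \<open>L \<le> 2 + \<alpha>\<close> all firms choosing \<open>\<beta>\<close> is stable; if
  \<open>2 \<gamma>\<^sub>k - L \<ge> 2 + \<alpha>\<close> the profile with only firm \<open>k\<close> at \<open>\<beta>\<close> is. Otherwise the lengths
  \<open>\<gamma>\<^sub>i / (2 + \<alpha>)\<close> satisfy the polygon inequalities for closing a polygon with a side of length
  one, so unit vectors in a plane through \<open>\<beta>\<close> achieve \<open>A q = \<beta>\<close>.
\<close>

section \<open>Closing polygons in the plane\<close>

lemma exists_unit_complex_triangle:
  fixes a b c :: real
  assumes "0 \<le> a" "0 \<le> b" "0 \<le> c" "\<bar>a - b\<bar> \<le> c" "c \<le> a + b"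
  obtains z w :: complex where "cmod z = 1" "cmod w = 1" "of_real a * z + of_real b * w = of_real c"
proof -
  define f where "f t = cmod (of_real c - of_real a * cis t)" for t
  have "f 0 \<le> b" "b \<le> f pi"
    using assms by (simp_all add: f_def flip: of_real_diff of_real_add)
  moreover have "continuous_on {0..pi} f"
    unfolding f_def by (intro continuous_intros)
  ultimately obtain t where "f t = b"
    using IVT'[of f 0 b pi] by auto
  show ?thesis
  proof (cases "b = 0")
    case True
    with \<open>f t = b\<close> show ?thesis
      by (intro that[of "cis t" 1]) (auto simp: f_def)
  next
    case False
    with \<open>f t = b\<close> show ?thesis
      by (intro that[of "cis t" "(of_real c - of_real a * cis t) / of_real b"])
        (auto simp: f_def norm_divide)
  qed
qed

lemma exists_unit_complex_weighted_sum:
  fixes l :: "'i \<Rightarrow> real"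
  assumes "finite S" "\<forall>i\<in>S. 0 \<le> l i"
    and "0 \<le> r" "r \<le> sum l S" "\<forall>i\<in>S. 2 * l i - sum l S \<le> r"
  shows "\<exists>z. (\<forall>i\<in>S. cmod (z i) = 1) \<and> (\<Sum>i\<in>S. of_real (l i) * z i) = of_real r"
  using assms
proof (induction S arbitrary: r rule: finite_induct)
  case empty
  then show ?case by simp
next
  case (insert x F)
  define R where "R = sum l F"
  have sum_insert: "sum l (insert x F) = l x + R"
    using insert.hyps by (simp add: R_def)
  have le_R: "l i \<le> R" if "i \<in> F" for i
    using insert.hyps insert.prems that unfolding R_def by (intro member_le_sum) auto
  \<comment> \<open>The sides in \<open>F\<close> are to close onto a segment of length \<open>\<rho>\<close>, which must form a triangle
    with \<open>l x\<close> and \<open>r\<close>; this choice of \<open>\<rho>\<close> meets both sets of inequalities.\<close>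
  define \<rho> where "\<rho> = min R (r + l x)"
  obtain z' where z': "\<forall>i\<in>F. cmod (z' i) = 1" "(\<Sum>i\<in>F. of_real (l i) * z' i) = of_real \<rho>"
  proof -
    have "\<forall>i\<in>F. 2 * l i - R \<le> \<rho>"
      using insert.prems le_R sum_insert by (fastforce simp: \<rho>_def)
    moreover have "0 \<le> \<rho>" "\<rho> \<le> R"
      using insert.prems R_def by (auto simp: \<rho>_def intro: sum_nonneg)
    ultimately show ?thesis
      using that insert.IH insert.prems(1) unfolding R_def by blast
  qed
  obtain z0 w where z0w: "cmod z0 = 1" "cmod w = 1" "of_real (l x) * z0 + of_real \<rho> * w = of_real r"
  proof (rule exists_unit_complex_triangle)
    show "0 \<le> l x" "0 \<le> \<rho>" "0 \<le> r"
      using insert.prems R_def by (auto simp: \<rho>_def intro: sum_nonneg)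
    show "\<bar>l x - \<rho>\<bar> \<le> r" "r \<le> l x + \<rho>"
      using insert.prems sum_insert by (auto simp: \<rho>_def)
  qed
  define z where "z i = (if i = x then z0 else w * z' i)" for i
  have "(\<Sum>i\<in>F. of_real (l i) * z i) = w * (\<Sum>i\<in>F. of_real (l i) * z' i)"
    using insert.hyps by (auto simp: z_def sum_distrib_left mult.left_commute intro: sum.cong)
  then have "(\<Sum>i\<in>insert x F. of_real (l i) * z i) = of_real r"
    using insert.hyps z'(2) z0w(3) by (simp add: z_def mult.commute)
  moreover have "\<forall>i\<in>insert x F. cmod (z i) = 1"
    using z' z0w by (simp add: z_def norm_mult)
  ultimately show ?case by blast
qed

lemma norm_complex_in_orthonormal_plane:
  fixes u v :: "'a::real_inner"
  assumes "norm u = 1" "norm v = 1" "u \<bullet> v = 0"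
  shows "norm (Re z *\<^sub>R u + Im z *\<^sub>R v) = cmod z"
proof -
  have "u \<bullet> u = 1" "v \<bullet> v = 1" "v \<bullet> u = 0"
    using assms by (simp_all add: dot_square_norm inner_commute)
  then have "(Re z *\<^sub>R u + Im z *\<^sub>R v) \<bullet> (Re z *\<^sub>R u + Im z *\<^sub>R v) = (Re z)\<^sup>2 + (Im z)\<^sup>2"
    using assms(3) by (simp add: inner_add_left inner_add_right power2_eq_square)
  also have "\<dots> = (cmod z)\<^sup>2"
    by (simp add: cmod_power2)
  finally show ?thesis
    by (simp add: norm_eq_sqrt_inner)
qed

section \<open>Best responses and equilibria\<close>

lemma unit_vector_inner_eq_norm:
  fixes g a0 :: "'a::real_inner"
  assumes "norm a0 = 1"
  obtains a where "norm a = 1" "a \<bullet> g = norm g"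
proof (cases "g = 0")
  case True
  with assms show ?thesis by (intro that[of a0]) auto
next
  case False
  then show ?thesis
    by (intro that[of "sgn g"]) (simp_all add: norm_sgn sgn_div_norm dot_square_norm power2_eq_square)
qed

lemma payoff_le_best_value:
  fixes a g :: "'a::real_inner"
  assumes "\<alpha> > 0" "norm a = 1" "x \<ge> 0" "xs > 0" "2 * (1 + \<alpha>) * xs = \<alpha> * norm g + c"
  shows "\<alpha> * x * (a \<bullet> g) - (1 + \<alpha>) * x\<^sup>2 + c * x \<le> (1 + \<alpha>) * xs\<^sup>2"
    and "\<alpha> * x * (a \<bullet> g) - (1 + \<alpha>) * x\<^sup>2 + c * x = (1 + \<alpha>) * xs\<^sup>2 \<longleftrightarrow> x = xs \<and> a \<bullet> g = norm g"
proof -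
  have square: "\<alpha> * x * norm g - (1 + \<alpha>) * x\<^sup>2 + c * x = (1 + \<alpha>) * (xs\<^sup>2 - (x - xs)\<^sup>2)"
    using assms(5) by (simp add: algebra_simps power2_eq_square)
  have "a \<bullet> g \<le> norm g"
    using norm_cauchy_schwarz[of a g] assms(2) by simp
  then have aligned: "\<alpha> * x * (a \<bullet> g) \<le> \<alpha> * x * norm g"
    using assms(1,3) by (simp add: mult_left_mono)
  have "(1 + \<alpha>) * (x - xs)\<^sup>2 \<ge> 0"
    using assms(1) by simp
  with aligned square show "\<alpha> * x * (a \<bullet> g) - (1 + \<alpha>) * x\<^sup>2 + c * x \<le> (1 + \<alpha>) * xs\<^sup>2"
    by (simp add: algebra_simps)
  show "\<alpha> * x * (a \<bullet> g) - (1 + \<alpha>) * x\<^sup>2 + c * x = (1 + \<alpha>) * xs\<^sup>2 \<longleftrightarrow> x = xs \<and> a \<bullet> g = norm g"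
  proof
    assume max: "\<alpha> * x * (a \<bullet> g) - (1 + \<alpha>) * x\<^sup>2 + c * x = (1 + \<alpha>) * xs\<^sup>2"
    then have "(1 + \<alpha>) * (x - xs)\<^sup>2 \<le> 0"
      using aligned square by (simp add: algebra_simps)
    then have "x = xs"
      using assms(1) by (auto simp: mult_le_0_iff)
    moreover have "\<alpha> * x * norm g - (1 + \<alpha>) * x\<^sup>2 + c * x = (1 + \<alpha>) * xs\<^sup>2"
      using square \<open>x = xs\<close> by simp
    ultimately have "\<alpha> * x * (a \<bullet> g) = \<alpha> * x * norm g"
      using max by linarith
    with \<open>x = xs\<close> assms(1,4) show "x = xs \<and> a \<bullet> g = norm g"
      by simp
  next
    assume "x = xs \<and> a \<bullet> g = norm g"
    with square show "\<alpha> * x * (a \<bullet> g) - (1 + \<alpha>) * x\<^sup>2 + c * x = (1 + \<alpha>) * xs\<^sup>2"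
      by simp
  qed
qed

lemma best_response_iff:
  fixes g a0 :: "'a::real_inner"
  assumes "\<alpha> > 0" "c > 0" "norm a0 = 1" "x0 \<ge> 0"
  defines "\<pi> a x \<equiv> \<alpha> * x * (a \<bullet> g) - (1 + \<alpha>) * x\<^sup>2 + c * x"
  shows "(\<forall>a x. norm a = 1 \<longrightarrow> x \<ge> 0 \<longrightarrow> \<pi> a x \<le> \<pi> a0 x0)
    \<longleftrightarrow> 2 * (1 + \<alpha>) * x0 = \<alpha> * norm g + c \<and> a0 \<bullet> g = norm g"
proof -
  define xs where "xs = (\<alpha> * norm g + c) / (2 * (1 + \<alpha>))"
  have "xs > 0"
    using assms by (simp add: xs_def add_nonneg_pos)
  have xs: "2 * (1 + \<alpha>) * xs = \<alpha> * norm g + c"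
    using \<open>\<alpha> > 0\<close> by (simp add: xs_def)
  note best_value = payoff_le_best_value[OF \<open>\<alpha> > 0\<close> _ _ \<open>xs > 0\<close> xs, folded \<pi>_def]
  obtain u where "norm u = 1" "u \<bullet> g = norm g"
    using unit_vector_inner_eq_norm[OF \<open>norm a0 = 1\<close>] .
  then have "\<pi> u xs = (1 + \<alpha>) * xs\<^sup>2"
    using best_value(2)[of u xs] \<open>xs > 0\<close> by simp
  have "(\<forall>a x. norm a = 1 \<longrightarrow> x \<ge> 0 \<longrightarrow> \<pi> a x \<le> \<pi> a0 x0) \<longleftrightarrow> \<pi> a0 x0 = (1 + \<alpha>) * xs\<^sup>2"
  proof
    assume "\<forall>a x. norm a = 1 \<longrightarrow> x \<ge> 0 \<longrightarrow> \<pi> a x \<le> \<pi> a0 x0"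
    then have "\<pi> u xs \<le> \<pi> a0 x0"
      using \<open>norm u = 1\<close> \<open>xs > 0\<close> by simp
    with \<open>\<pi> u xs = (1 + \<alpha>) * xs\<^sup>2\<close> show "\<pi> a0 x0 = (1 + \<alpha>) * xs\<^sup>2"
      using best_value(1)[OF assms(3,4)] by linarith
  qed (use best_value(1) in simp)
  also have "\<dots> \<longleftrightarrow> x0 = xs \<and> a0 \<bullet> g = norm g"
    by (rule best_value(2)[OF assms(3,4)])
  also have "\<dots> \<longleftrightarrow> 2 * (1 + \<alpha>) * x0 = \<alpha> * norm g + c \<and> a0 \<bullet> g = norm g"
    using \<open>\<alpha> > 0\<close> by (auto simp: xs_def field_simps)
  finally show ?thesis .
qed

lemma unit_parallel_eq_sgn:
  fixes a w :: "'a::real_normed_vector"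
  assumes "norm a = 1" "w = d *\<^sub>R a" "w \<noteq> 0"
  shows "a = sgn w \<or> a = - sgn w"
proof -
  have "sgn a = a"
    using assms(1) by (simp add: sgn_div_norm)
  moreover have "sgn d = 1 \<or> sgn d = -1"
    using assms(2,3) by (cases "d > 0") (auto simp: sgn_real_def)
  ultimately show ?thesis
    using assms(2) by (auto simp: sgn_scaleR)
qed

lemma units_parallel_to_vector_eq_pm:
  fixes \<beta> w :: "'a::real_normed_vector"
  assumes "norm \<beta> = 1" "w \<noteq> 0"
    and parallel: "\<forall>i\<in>I. norm (a i) = 1 \<and> (\<exists>d. w = d *\<^sub>R a i)"
    and sum: "\<beta> = w + (\<Sum>i\<in>I. q i *\<^sub>R a i)"
  shows "\<forall>i\<in>I. a i = \<beta> \<or> a i = - \<beta>"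
proof -
  define u where "u = sgn w"
  have a_pm_u: "a i = u \<or> a i = - u" if "i \<in> I" for i
    using parallel that unit_parallel_eq_sgn[of "a i" w] assms(2) by (auto simp: u_def)
  have "norm u = 1"
    using assms(2) by (simp add: u_def norm_sgn)
  have "(\<Sum>i\<in>I. q i *\<^sub>R a i) = (\<Sum>i\<in>I. q i * (if a i = u then 1 else -1)) *\<^sub>R u"
    unfolding scaleR_sum_left
  proof (intro sum.cong refl)
    show "q i *\<^sub>R a i = (q i * (if a i = u then 1 else -1)) *\<^sub>R u" if "i \<in> I" for i
      using a_pm_u[OF that] by auto
  qed
  moreover have "w = norm w *\<^sub>R u"
    using assms(2) by (simp add: u_def sgn_div_norm)
  ultimately obtain k where "\<beta> = k *\<^sub>R u"
    using sum by (metis scaleR_left_distrib)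
  moreover have "\<beta> \<noteq> 0" "sgn \<beta> = \<beta>"
    using assms(1) by (auto simp: sgn_div_norm)
  ultimately have "u = \<beta> \<or> u = - \<beta>"
    using unit_parallel_eq_sgn[OF \<open>norm u = 1\<close>] by metis
  then show ?thesis
    using a_pm_u by (metis minus_minus)
qed

definition residual :: "real^'m \<Rightarrow> (real^'m)^'n \<Rightarrow> real^'n \<Rightarrow> 'n \<Rightarrow> real^'m" where
  "residual \<beta> A q i = \<beta> - (\<Sum>j\<in>UNIV - {i}. (q $ j) *\<^sub>R (A $ j))"

lemma profit_eq_residual:
  "profit \<alpha> \<beta> \<gamma> A q i a x = \<alpha> * x * (a \<bullet> residual \<beta> A q i) - (1 + \<alpha>) * x\<^sup>2 + \<gamma> $ i * x"
  by (simp add: profit_def residual_def)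

lemma residual_eq: "residual \<beta> A q i = \<beta> - Aq A q + (q $ i) *\<^sub>R (A $ i)"
  by (simp add: residual_def Aq_def sum.remove[of UNIV i] algebra_simps)

lemma equilibrium_iff:
  assumes "\<alpha> > 0" "\<forall>i. \<gamma> $ i > 0"
  shows "equilibrium \<alpha> \<beta> \<gamma> A q \<longleftrightarrow>
    (\<forall>i. norm (A $ i) = 1
       \<and> 2 * (1 + \<alpha>) * q $ i = \<alpha> * norm (residual \<beta> A q i) + \<gamma> $ i
       \<and> A $ i \<bullet> residual \<beta> A q i = norm (residual \<beta> A q i))"
proof -
  have best_response:
    "(q $ i \<ge> 0 \<and> (\<forall>a x. norm a = 1 \<longrightarrow> x \<ge> 0 \<longrightarrow> profit \<alpha> \<beta> \<gamma> A q i a x \<le> profit \<alpha> \<beta> \<gamma> A q i (A $ i) (q $ i)))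
     \<longleftrightarrow> 2 * (1 + \<alpha>) * q $ i = \<alpha> * norm (residual \<beta> A q i) + \<gamma> $ i
       \<and> A $ i \<bullet> residual \<beta> A q i = norm (residual \<beta> A q i)"
    if "norm (A $ i) = 1" for i
  proof (cases "q $ i \<ge> 0")
    case True
    then show ?thesis
      using best_response_iff[OF assms(1) _ that True] assms(2) by (simp add: profit_eq_residual)
  next
    case False
    moreover have "0 \<le> \<alpha> * norm (residual \<beta> A q i) + \<gamma> $ i"
      using assms by (simp add: add_nonneg_pos less_imp_le)
    ultimately show ?thesis
      using assms(1) by (smt (verit) mult_pos_neg)
  qed
  show ?thesis
    unfolding equilibrium_def using best_response by blast
qed

lemma equilibrium_gap_eq:
  assumes "\<alpha> > 0" "\<forall>i. \<gamma> $ i > 0" "equilibrium \<alpha> \<beta> \<gamma> A q"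
  shows "\<beta> - Aq A q = (norm (residual \<beta> A q i) - q $ i) *\<^sub>R A $ i"
proof -
  define g where "g = residual \<beta> A q i"
  have "A $ i \<bullet> g = norm (A $ i) * norm g" "norm (A $ i) = 1"
    using assms by (simp_all add: equilibrium_iff g_def)
  then have "g = norm g *\<^sub>R A $ i"
    using norm_cauchy_schwarz_eq[of "A $ i" g] by simp
  moreover have "\<beta> - Aq A q = g - q $ i *\<^sub>R A $ i"
    by (simp add: g_def residual_eq)
  ultimately show ?thesis
    by (metis g_def scaleR_left_diff_distrib)
qed

lemma equilibrium_typeA_or_sign_profile:
  assumes "\<alpha> > 0" "\<forall>i. \<gamma> $ i > 0" "norm \<beta> = 1"
    and eq: "equilibrium \<alpha> \<beta> \<gamma> A q"
  shows "typeA \<alpha> \<beta> \<gamma> A q \<or> (\<forall>i. A $ i = \<beta> \<or> A $ i = - \<beta>)"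
proof -
  note eqi = eq[unfolded equilibrium_iff[OF assms(1,2)]]
  let ?r = "\<lambda>i. norm (residual \<beta> A q i)"
  have unit: "norm (A $ i) = 1" for i
    using eqi by blast
  note gap = equilibrium_gap_eq[OF assms(1,2) eq]
  show ?thesis
  proof (cases "Aq A q = \<beta>")
    case True
    have "q $ i = \<gamma> $ i / (2 + \<alpha>)" for i
    proof -
      have "?r i = q $ i"
        using gap[of i] unit[of i] True by auto
      then have "2 * (1 + \<alpha>) * q $ i = \<alpha> * q $ i + \<gamma> $ i"
        using eqi by metis
      then show ?thesis
        using assms(1) by (simp add: field_simps)
    qed
    with True show ?thesis
      by (simp add: typeA_def vec_eq_iff)
  next
    case False
    have "\<forall>i\<in>UNIV. A $ i = \<beta> \<or> A $ i = - \<beta>"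
    proof (rule units_parallel_to_vector_eq_pm[OF assms(3)])
      show "\<beta> - Aq A q \<noteq> 0"
        using False by simp
      show "\<forall>i\<in>UNIV. norm (A $ i) = 1 \<and> (\<exists>d. \<beta> - Aq A q = d *\<^sub>R A $ i)"
        using unit gap by blast
      show "\<beta> = \<beta> - Aq A q + (\<Sum>i\<in>UNIV. q $ i *\<^sub>R A $ i)"
        by (simp add: Aq_def)
    qed
    then show ?thesis
      by blast
  qed
qed

section \<open>Sign profiles\<close>

text \<open>For \<open>a\<^sub>i = \<sigma>\<^sub>i \<beta>\<close> one has \<open>\<beta> - A q = (1 - \<sigma> \<bullet> q) \<beta>\<close>; \<open>sign_gap\<close> is the value of this
  coefficient in equilibrium.\<close>

definition sign_gap :: "real \<Rightarrow> real^'n \<Rightarrow> real^'n \<Rightarrow> real" where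
  "sign_gap \<alpha> \<gamma> \<sigma> = (2 + \<alpha> - \<sigma> \<bullet> \<gamma>) / (2 + (real CARD('n) + 1) * \<alpha>)"

definition sign_profile_stable :: "real \<Rightarrow> real^'n \<Rightarrow> real^'n \<Rightarrow> bool" where
  "sign_profile_stable \<alpha> \<gamma> \<sigma> \<longleftrightarrow>
     (\<forall>j. \<sigma> $ j = -1 \<longrightarrow>
        (2 + \<alpha>) - (2 + (real CARD('n) + 1) * \<alpha>) / (2 * (1 + \<alpha>)) * \<gamma> $ j \<le> \<sigma> \<bullet> \<gamma>) \<and>
     (\<forall>j. \<sigma> $ j = 1 \<longrightarrow>
        \<sigma> \<bullet> \<gamma> \<le> (2 + \<alpha>) + (2 + (real CARD('n) + 1) * \<alpha>) / (2 * (1 + \<alpha>)) * \<gamma> $ j)"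

lemma inner_sign_vector_self:
  fixes \<sigma> :: "real^'n"
  assumes "\<forall>i. \<sigma> $ i = -1 \<or> \<sigma> $ i = 1"
  shows "\<sigma> \<bullet> \<sigma> = real CARD('n)"
proof -
  have "\<sigma> $ i * \<sigma> $ i = 1" for i
    using assms by (metis mult_1 mult_minus1 minus_minus)
  then show ?thesis
    by (simp add: inner_vec_def)
qed

lemma sign_profile_residual:
  assumes "\<forall>i. A $ i = \<sigma> $ i *\<^sub>R \<beta>"
  shows "residual \<beta> A q i = (1 - \<sigma> \<bullet> q + \<sigma> $ i * q $ i) *\<^sub>R \<beta>"
proof -
  have "Aq A q = (\<sigma> \<bullet> q) *\<^sub>R \<beta>"
    using assms by (simp add: Aq_def inner_vec_def scaleR_sum_left mult.commute)
  then show ?thesis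
    using assms by (simp add: residual_eq algebra_simps)
qed

lemma equilibrium_sign_profile_iff_gap:
  fixes \<sigma> q :: "real^'n"
  assumes "\<alpha> > 0" "\<forall>i. \<gamma> $ i > 0" "norm \<beta> = 1"
    and sign: "\<forall>i. \<sigma> $ i = -1 \<or> \<sigma> $ i = 1" and A: "\<forall>i. A $ i = \<sigma> $ i *\<^sub>R \<beta>"
  shows "equilibrium \<alpha> \<beta> \<gamma> A q \<longleftrightarrow>
    (\<forall>i. 0 \<le> \<sigma> $ i * (1 - \<sigma> \<bullet> q) + q $ i) \<and> (2 + \<alpha>) *\<^sub>R q = \<gamma> + (\<alpha> * (1 - \<sigma> \<bullet> q)) *\<^sub>R \<sigma>"
proof -
  define m where "m i = \<sigma> $ i * (1 - \<sigma> \<bullet> q) + q $ i" for i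
  have abs_sign: "\<bar>\<sigma> $ i\<bar> = 1" and sign_sq: "\<sigma> $ i * \<sigma> $ i = 1" for i
    using sign[rule_format, of i] by auto
  then have "\<sigma> $ i * (1 - \<sigma> \<bullet> q + \<sigma> $ i * q $ i) = m i" for i
    by (simp add: m_def algebra_simps)
  then have res: "residual \<beta> A q i = (\<sigma> $ i * m i) *\<^sub>R \<beta>" for i
    using sign_profile_residual[OF A, of q i] sign_sq[of i] by (metis mult.assoc mult_1)
  have "\<beta> \<bullet> \<beta> = 1"
    using \<open>norm \<beta> = 1\<close> by (simp add: dot_square_norm)
  then have "A $ i \<bullet> residual \<beta> A q i = m i" for i
    using A res sign_sq by (simp add: mult.assoc[symmetric])
  moreover have "norm (residual \<beta> A q i) = \<bar>m i\<bar>" "norm (A $ i) = 1" for i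
    using A res abs_sign \<open>norm \<beta> = 1\<close> by (simp_all add: abs_mult)
  ultimately have "equilibrium \<alpha> \<beta> \<gamma> A q \<longleftrightarrow>
      (\<forall>i. 2 * (1 + \<alpha>) * q $ i = \<alpha> * \<bar>m i\<bar> + \<gamma> $ i \<and> m i = \<bar>m i\<bar>)"
    using assms(1,2) by (simp add: equilibrium_iff)
  also have "\<dots> \<longleftrightarrow> (\<forall>i. 0 \<le> m i \<and> (2 + \<alpha>) * q $ i = \<gamma> $ i + \<alpha> * \<sigma> $ i * (1 - \<sigma> \<bullet> q))"
  proof -
    have "2 * (1 + \<alpha>) * q $ i = \<alpha> * m i + \<gamma> $ i \<longleftrightarrow> (2 + \<alpha>) * q $ i = \<gamma> $ i + \<alpha> * \<sigma> $ i * (1 - \<sigma> \<bullet> q)"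
      for i
      by (simp add: m_def algebra_simps)
    then show ?thesis
      by (metis abs_ge_zero abs_of_nonneg)
  qed
  also have "\<dots> \<longleftrightarrow> (\<forall>i. 0 \<le> m i) \<and> (2 + \<alpha>) *\<^sub>R q = \<gamma> + (\<alpha> * (1 - \<sigma> \<bullet> q)) *\<^sub>R \<sigma>"
    by (auto simp: vec_eq_iff algebra_simps)
  finally show ?thesis
    by (simp add: m_def)
qed

lemma sign_gap_unique:
  fixes \<sigma> q :: "real^'n"
  assumes "\<alpha> > 0" "\<forall>i. \<sigma> $ i = -1 \<or> \<sigma> $ i = 1"
    and "(2 + \<alpha>) *\<^sub>R q = \<gamma> + (\<alpha> * X) *\<^sub>R \<sigma>"
  shows "1 - \<sigma> \<bullet> q = X \<longleftrightarrow> X = sign_gap \<alpha> \<gamma> \<sigma>"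
proof -
  define D where "D = 2 + (real CARD('n) + 1) * \<alpha>"
  have "D > 0"
    using assms(1) by (simp add: D_def add_pos_nonneg)
  have gap: "sign_gap \<alpha> \<gamma> \<sigma> = (2 + \<alpha> - \<sigma> \<bullet> \<gamma>) / D"
    by (simp add: sign_gap_def D_def)
  have inner_q: "(2 + \<alpha>) * (\<sigma> \<bullet> q) = \<sigma> \<bullet> \<gamma> + \<alpha> * X * real CARD('n)"
    using arg_cong[OF assms(3), of "inner \<sigma>"] inner_sign_vector_self[OF assms(2)]
    by (simp add: inner_add_right)
  have "1 - \<sigma> \<bullet> q = X \<longleftrightarrow> (2 + \<alpha>) * (1 - \<sigma> \<bullet> q) = (2 + \<alpha>) * X"
    using assms(1) by simp
  also have "(2 + \<alpha>) * (1 - \<sigma> \<bullet> q) = 2 + \<alpha> - \<sigma> \<bullet> \<gamma> - \<alpha> * X * real CARD('n)"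
    using inner_q by (simp add: right_diff_distrib)
  also have "\<dots> = (2 + \<alpha>) * X \<longleftrightarrow> D * X = 2 + \<alpha> - \<sigma> \<bullet> \<gamma>"
    by (auto simp: D_def algebra_simps)
  also have "\<dots> \<longleftrightarrow> X = sign_gap \<alpha> \<gamma> \<sigma>"
    using \<open>D > 0\<close> by (auto simp: gap field_simps)
  finally show ?thesis .
qed

lemma sign_profile_stable_iff:
  fixes \<sigma> :: "real^'n"
  assumes "\<alpha> > 0" "\<forall>i. \<sigma> $ i = -1 \<or> \<sigma> $ i = 1"
  shows "sign_profile_stable \<alpha> \<gamma> \<sigma> \<longleftrightarrow> (\<forall>i. 0 \<le> 2 * (1 + \<alpha>) * \<sigma> $ i * sign_gap \<alpha> \<gamma> \<sigma> + \<gamma> $ i)"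
proof -
  define D where "D = 2 + (real CARD('n) + 1) * \<alpha>"
  have "D > 0"
    using assms(1) by (simp add: D_def add_pos_nonneg)
  have gap: "sign_gap \<alpha> \<gamma> \<sigma> = (2 + \<alpha> - \<sigma> \<bullet> \<gamma>) / D"
    by (simp add: sign_gap_def D_def)
  have "(\<sigma> $ i = -1 \<longrightarrow> (2 + \<alpha>) - D / (2 * (1 + \<alpha>)) * \<gamma> $ i \<le> \<sigma> \<bullet> \<gamma>) \<and>
        (\<sigma> $ i = 1 \<longrightarrow> \<sigma> \<bullet> \<gamma> \<le> (2 + \<alpha>) + D / (2 * (1 + \<alpha>)) * \<gamma> $ i)
    \<longleftrightarrow> 0 \<le> 2 * (1 + \<alpha>) * \<sigma> $ i * (2 + \<alpha> - \<sigma> \<bullet> \<gamma>) + D * \<gamma> $ i" for i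
    using assms(1) assms(2)[rule_format, of i] by (auto simp: field_simps)
  moreover have "2 * (1 + \<alpha>) * \<sigma> $ i * sign_gap \<alpha> \<gamma> \<sigma> + \<gamma> $ i
      = (2 * (1 + \<alpha>) * \<sigma> $ i * (2 + \<alpha> - \<sigma> \<bullet> \<gamma>) + D * \<gamma> $ i) / D" for i
    using \<open>D > 0\<close> by (simp add: gap field_simps)
  ultimately show ?thesis
    unfolding sign_profile_stable_def D_def[symmetric] using \<open>D > 0\<close>
    by (simp add: zero_le_divide_iff) blast
qed

lemma sign_profile_quantities_iff:
  fixes \<sigma> q :: "real^'n"
  assumes "\<alpha> > 0"
  shows "(2 + \<alpha>) *\<^sub>R q = \<gamma> + (\<alpha> * sign_gap \<alpha> \<gamma> \<sigma>) *\<^sub>R \<sigma> \<longleftrightarrow>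
    q = (1 / (2 + \<alpha>)) *\<^sub>R \<gamma>
        - (\<alpha> * (\<sigma> \<bullet> \<gamma> - (2 + \<alpha>)) / ((2 + \<alpha>) * (2 + (real CARD('n) + 1) * \<alpha>))) *\<^sub>R \<sigma>"
proof -
  have "\<alpha> * (\<sigma> \<bullet> \<gamma> - (2 + \<alpha>)) / ((2 + \<alpha>) * (2 + (real CARD('n) + 1) * \<alpha>))
      = - (\<alpha> * sign_gap \<alpha> \<gamma> \<sigma> / (2 + \<alpha>))"
    by (simp add: sign_gap_def field_simps) (simp only: minus_divide_left minus_diff_eq)
  then have formula: "(1 / (2 + \<alpha>)) *\<^sub>R \<gamma>
        - (\<alpha> * (\<sigma> \<bullet> \<gamma> - (2 + \<alpha>)) / ((2 + \<alpha>) * (2 + (real CARD('n) + 1) * \<alpha>))) *\<^sub>R \<sigma>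
      = (1 / (2 + \<alpha>)) *\<^sub>R (\<gamma> + (\<alpha> * sign_gap \<alpha> \<gamma> \<sigma>) *\<^sub>R \<sigma>)"
    by (simp add: scaleR_add_right)
  show ?thesis
    unfolding formula using assms by (subst eq_vector_fraction_iff) auto
qed

lemma equilibrium_sign_profile_iff:
  fixes \<sigma> q :: "real^'n"
  assumes "\<alpha> > 0" "\<forall>i. \<gamma> $ i > 0" "norm \<beta> = 1"
    and sign: "\<forall>i. \<sigma> $ i = -1 \<or> \<sigma> $ i = 1" and A: "\<forall>i. A $ i = \<sigma> $ i *\<^sub>R \<beta>"
  shows "equilibrium \<alpha> \<beta> \<gamma> A q \<longleftrightarrow> sign_profile_stable \<alpha> \<gamma> \<sigma> \<and>
    q = (1 / (2 + \<alpha>)) *\<^sub>R \<gamma>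
        - (\<alpha> * (\<sigma> \<bullet> \<gamma> - (2 + \<alpha>)) / ((2 + \<alpha>) * (2 + (real CARD('n) + 1) * \<alpha>))) *\<^sub>R \<sigma>"
proof -
  define S where "S = sign_gap \<alpha> \<gamma> \<sigma>"
  have "equilibrium \<alpha> \<beta> \<gamma> A q \<longleftrightarrow>
      (\<forall>i. 0 \<le> \<sigma> $ i * (1 - \<sigma> \<bullet> q) + q $ i) \<and> (2 + \<alpha>) *\<^sub>R q = \<gamma> + (\<alpha> * (1 - \<sigma> \<bullet> q)) *\<^sub>R \<sigma>"
    by (rule equilibrium_sign_profile_iff_gap[OF assms])
  also have "\<dots> \<longleftrightarrow> (\<forall>i. 0 \<le> \<sigma> $ i * S + q $ i) \<and> (2 + \<alpha>) *\<^sub>R q = \<gamma> + (\<alpha> * S) *\<^sub>R \<sigma>"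
    using sign_gap_unique[OF assms(1) sign] unfolding S_def by metis
  also have "\<dots> \<longleftrightarrow> sign_profile_stable \<alpha> \<gamma> \<sigma> \<and> (2 + \<alpha>) *\<^sub>R q = \<gamma> + (\<alpha> * S) *\<^sub>R \<sigma>"
  proof -
    have "(2 + \<alpha>) * (\<sigma> $ i * S + q $ i) = 2 * (1 + \<alpha>) * \<sigma> $ i * S + \<gamma> $ i"
      if "(2 + \<alpha>) *\<^sub>R q = \<gamma> + (\<alpha> * S) *\<^sub>R \<sigma>" for i
      using arg_cong[OF that, of "\<lambda>v. v $ i"] by (simp add: algebra_simps)
    then show ?thesis
      using sign_profile_stable_iff[OF assms(1) sign] assms(1) unfolding S_def
      by (smt (verit) zero_le_mult_iff)
  qed
  also have "\<dots> \<longleftrightarrow> sign_profile_stable \<alpha> \<gamma> \<sigma> \<and>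
      q = (1 / (2 + \<alpha>)) *\<^sub>R \<gamma>
          - (\<alpha> * (\<sigma> \<bullet> \<gamma> - (2 + \<alpha>)) / ((2 + \<alpha>) * (2 + (real CARD('n) + 1) * \<alpha>))) *\<^sub>R \<sigma>"
    using sign_profile_quantities_iff[OF assms(1)] unfolding S_def by blast
  finally show ?thesis .
qed

section \<open>Existence of equilibria\<close>

lemma sign_profile_equilibrium_exists:
  fixes \<sigma> :: "real^'n" and \<beta> :: "real^'m"
  assumes "\<alpha> > 0" "\<forall>i. \<gamma> $ i > 0" "norm \<beta> = 1"
    and "\<forall>i. \<sigma> $ i = -1 \<or> \<sigma> $ i = 1" "sign_profile_stable \<alpha> \<gamma> \<sigma>"
  shows "\<exists>q. equilibrium \<alpha> \<beta> \<gamma> (\<chi> i. \<sigma> $ i *\<^sub>R \<beta>) q"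
  using equilibrium_sign_profile_iff[OF assms(1-4), of "\<chi> i. \<sigma> $ i *\<^sub>R \<beta>"] assms(5) by auto

lemma one_le_stability_factor:
  assumes "\<alpha> > 0"
  shows "1 \<le> (2 + (real CARD('n::finite) + 1) * \<alpha>) / (2 * (1 + \<alpha>))"
proof -
  have "2 * \<alpha> \<le> (real CARD('n) + 1) * \<alpha>"
    using assms by (intro mult_right_mono) (auto simp: Suc_le_eq)
  with assms show ?thesis
    by simp
qed

lemma concentration_equilibrium_exists:
  fixes \<beta> :: "real^'m" and \<gamma> :: "real^'n"
  assumes "\<alpha> > 0" "\<forall>i. \<gamma> $ i > 0" "norm \<beta> = 1"
    and "(\<Sum>i\<in>UNIV. \<gamma> $ i) \<le> 2 + \<alpha>"
  shows "\<exists>(A :: (real^'m)^'n) q. equilibrium \<alpha> \<beta> \<gamma> A q \<and> typeB \<beta> A"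
proof -
  define \<sigma> :: "real^'n" where "\<sigma> = (\<chi> i. 1)"
  have "\<sigma> \<bullet> \<gamma> = (\<Sum>i\<in>UNIV. \<gamma> $ i)"
    by (simp add: \<sigma>_def inner_vec_def)
  moreover have "0 \<le> (2 + (real CARD('n) + 1) * \<alpha>) / (2 * (1 + \<alpha>)) * \<gamma> $ j" for j
    using one_le_stability_factor[where 'n='n, OF assms(1)] assms(2)
    by (intro mult_nonneg_nonneg) (auto intro: less_imp_le)
  ultimately have "sign_profile_stable \<alpha> \<gamma> \<sigma>"
    using assms(4) unfolding sign_profile_stable_def by (simp add: \<sigma>_def add_increasing2)
  moreover have "\<forall>i. \<sigma> $ i = -1 \<or> \<sigma> $ i = 1"
    by (simp add: \<sigma>_def)
  ultimately obtain q where "equilibrium \<alpha> \<beta> \<gamma> (\<chi> i. \<sigma> $ i *\<^sub>R \<beta>) q"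
    using sign_profile_equilibrium_exists[OF assms(1-3)] by blast
  moreover have "typeB \<beta> (\<chi> i. \<sigma> $ i *\<^sub>R \<beta>)"
    by (simp add: typeB_def \<sigma>_def)
  ultimately show ?thesis
    by blast
qed

lemma dominant_component_eq_Max:
  fixes \<gamma> :: "real^'n"
  assumes "\<forall>i. 0 \<le> \<gamma> $ i" "(\<Sum>i\<in>UNIV. \<gamma> $ i) < 2 * \<gamma> $ k"
  shows "\<gamma> $ k = Max (range (\<lambda>i. \<gamma> $ i))"
proof (rule Max_eqI[symmetric])
  have "\<gamma> $ j \<le> \<gamma> $ k" if "j \<noteq> k" for j
  proof -
    have "sum (\<lambda>i. \<gamma> $ i) {j, k} \<le> (\<Sum>i\<in>UNIV. \<gamma> $ i)"
      using assms(1) by (intro sum_mono2) auto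
    with that assms(2) show ?thesis
      by simp
  qed
  then show "y \<le> \<gamma> $ k" if "y \<in> range (\<lambda>i. \<gamma> $ i)" for y
    using that by fastforce
qed auto

lemma polarized_sign_profile_stable:
  fixes \<gamma> :: "real^'n"
  assumes "\<alpha> > 0" "\<forall>i. \<gamma> $ i > 0"
    and dominant: "2 + \<alpha> \<le> 2 * \<gamma> $ k - (\<Sum>i\<in>UNIV. \<gamma> $ i)"
  shows "sign_profile_stable \<alpha> \<gamma> (\<chi> i. if i = k then 1 else -1)"
proof -
  define L where "L = (\<Sum>i\<in>UNIV. \<gamma> $ i)"
  define C where "C = (2 + (real CARD('n) + 1) * \<alpha>) / (2 * (1 + \<alpha>))"
  define \<sigma> :: "real^'n" where "\<sigma> = (\<chi> i. if i = k then 1 else -1)"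
  have "\<gamma> $ k \<le> L"
    unfolding L_def using assms(2) by (intro member_le_sum) (auto intro: less_imp_le)
  have T: "\<sigma> \<bullet> \<gamma> = 2 * \<gamma> $ k - L"
  proof -
    have "\<sigma> \<bullet> \<gamma> = (\<Sum>i\<in>UNIV. (if i = k then 2 * \<gamma> $ i else 0) - \<gamma> $ i)"
      unfolding \<sigma>_def inner_vec_def by (intro sum.cong) auto
    then show ?thesis
      by (simp add: L_def sum_subtractf)
  qed
  have "1 \<le> C"
    unfolding C_def by (rule one_le_stability_factor[OF assms(1)])
  show ?thesis
    unfolding sign_profile_stable_def C_def[symmetric] \<sigma>_def[symmetric]
  proof (intro conjI allI impI)
    fix j
    have "0 \<le> C * \<gamma> $ j"
      using \<open>1 \<le> C\<close> assms(2) by (intro mult_nonneg_nonneg) (auto intro: less_imp_le)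
    with T dominant show "2 + \<alpha> - C * \<gamma> $ j \<le> \<sigma> \<bullet> \<gamma>"
      unfolding L_def[symmetric] by linarith
    assume "\<sigma> $ j = 1"
    then have "j = k"
      by (simp add: \<sigma>_def split: if_splits)
    have "\<gamma> $ k \<le> C * \<gamma> $ k"
      using \<open>1 \<le> C\<close> assms(2) mult_right_mono[of 1 C "\<gamma> $ k"] by (auto intro: less_imp_le)
    with T \<open>\<gamma> $ k \<le> L\<close> assms(1) show "\<sigma> \<bullet> \<gamma> \<le> 2 + \<alpha> + C * \<gamma> $ j"
      unfolding \<open>j = k\<close> by linarith
  qed
qed

lemma polarization_equilibrium_exists:
  fixes \<beta> :: "real^'m" and \<gamma> :: "real^'n"
  assumes "\<alpha> > 0" "\<forall>i. \<gamma> $ i > 0" "norm \<beta> = 1"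
    and dominant: "2 + \<alpha> \<le> 2 * \<gamma> $ k - (\<Sum>i\<in>UNIV. \<gamma> $ i)"
  shows "\<exists>(A :: (real^'m)^'n) q. equilibrium \<alpha> \<beta> \<gamma> A q \<and> typeC \<beta> \<gamma> A"
proof -
  define \<sigma> :: "real^'n" where "\<sigma> = (\<chi> i. if i = k then 1 else -1)"
  have "\<forall>i. \<sigma> $ i = -1 \<or> \<sigma> $ i = 1"
    by (simp add: \<sigma>_def)
  then obtain q where "equilibrium \<alpha> \<beta> \<gamma> (\<chi> i. \<sigma> $ i *\<^sub>R \<beta>) q"
    using sign_profile_equilibrium_exists[OF assms(1-3)] polarized_sign_profile_stable[OF assms(1,2) dominant]
    unfolding \<sigma>_def by blast
  moreover have "\<gamma> $ k = Max (range (\<lambda>i. \<gamma> $ i))"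
    using dominant_component_eq_Max[of \<gamma> k] assms(1,2) dominant by (auto intro: less_imp_le)
  then have "typeC \<beta> \<gamma> (\<chi> i. \<sigma> $ i *\<^sub>R \<beta>)"
    unfolding typeC_def by (intro exI[of _ k]) (simp add: \<sigma>_def)
  ultimately show ?thesis
    by blast
qed

lemma typeA_imp_equilibrium:
  assumes "\<alpha> > 0" "\<forall>i. \<gamma> $ i > 0" "\<forall>i. norm (A $ i) = 1" "typeA \<alpha> \<beta> \<gamma> A q"
  shows "equilibrium \<alpha> \<beta> \<gamma> A q"
  unfolding equilibrium_iff[OF assms(1,2)]
proof (intro allI conjI)
  fix i
  have q: "q $ i = \<gamma> $ i / (2 + \<alpha>)"
    using assms(4) by (simp add: typeA_def)
  then have "q $ i > 0"
    using assms(1,2) by simp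
  have "Aq A q = \<beta>"
    using assms(4) unfolding typeA_def by blast
  then have "residual \<beta> A q i = q $ i *\<^sub>R A $ i"
    by (simp add: residual_eq)
  then have norm_res: "norm (residual \<beta> A q i) = q $ i"
    and inner_res: "A $ i \<bullet> residual \<beta> A q i = q $ i"
    using assms(3) \<open>q $ i > 0\<close> by (simp_all add: dot_square_norm)
  show "2 * (1 + \<alpha>) * q $ i = \<alpha> * norm (residual \<beta> A q i) + \<gamma> $ i"
    unfolding norm_res using assms(1) q by (simp add: field_simps)
  show "A $ i \<bullet> residual \<beta> A q i = norm (residual \<beta> A q i)"
    unfolding norm_res inner_res ..
  show "norm (A $ i) = 1"
    using assms(3) by blast
qed

lemma typeA_equilibrium_exists:
  fixes \<beta> :: "real^'m" and \<gamma> :: "real^'n"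
  assumes "CARD('m) \<ge> 2" "\<alpha> > 0" "\<forall>i. \<gamma> $ i > 0" "norm \<beta> = 1"
    and "2 + \<alpha> \<le> (\<Sum>i\<in>UNIV. \<gamma> $ i)" "\<forall>k. 2 * \<gamma> $ k - (\<Sum>i\<in>UNIV. \<gamma> $ i) \<le> 2 + \<alpha>"
  shows "\<exists>(A :: (real^'m)^'n) q. equilibrium \<alpha> \<beta> \<gamma> A q \<and> typeA \<alpha> \<beta> \<gamma> A q"
proof -
  define q :: "real^'n" where "q = (1 / (2 + \<alpha>)) *\<^sub>R \<gamma>"
  have q_i: "q $ i = \<gamma> $ i / (2 + \<alpha>)" for i
    by (simp add: q_def)
  obtain z where z: "\<forall>i. cmod (z i) = 1" "(\<Sum>i\<in>UNIV. of_real (q $ i) * z i) = (1 :: complex)"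
  proof -
    have "2 * q $ i - (\<Sum>i\<in>UNIV. q $ i) = (2 * \<gamma> $ i - (\<Sum>i\<in>UNIV. \<gamma> $ i)) / (2 + \<alpha>)" for i
      by (simp add: q_i diff_divide_distrib flip: sum_divide_distrib)
    then have "\<forall>i\<in>UNIV. 2 * q $ i - (\<Sum>i\<in>UNIV. q $ i) \<le> 1"
      using assms(2,6) by (simp add: divide_le_eq)
    moreover have "1 \<le> (\<Sum>i\<in>UNIV. q $ i)"
      using assms(2,5) by (simp add: q_i le_divide_eq flip: sum_divide_distrib)
    moreover have "\<forall>i\<in>UNIV. 0 \<le> q $ i"
      using assms(2,3) by (simp add: q_i less_imp_le)
    ultimately show ?thesis
      using exists_unit_complex_weighted_sum[of UNIV "\<lambda>i. q $ i" 1] that by auto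
  qed
  obtain e :: "real^'m" where e: "norm e = 1" "\<beta> \<bullet> e = 0"
  proof -
    obtain y :: "real^'m" where "y \<noteq> 0" "orthogonal \<beta> y"
      using orthogonal_to_vector_exists[of \<beta>] assms(1) by auto
    then show ?thesis
      using that[of "sgn y"] by (simp add: orthogonal_def sgn_div_norm norm_sgn)
  qed
  define A :: "(real^'m)^'n" where "A = (\<chi> i. Re (z i) *\<^sub>R \<beta> + Im (z i) *\<^sub>R e)"
  have "\<forall>i. norm (A $ i) = 1"
    using norm_complex_in_orthonormal_plane[OF assms(4) e(1,2)] z(1) by (simp add: A_def)
  moreover have "Aq A q = \<beta>"
  proof -
    have "Aq A q = Re (\<Sum>i\<in>UNIV. of_real (q $ i) * z i) *\<^sub>R \<beta> + Im (\<Sum>i\<in>UNIV. of_real (q $ i) * z i) *\<^sub>R e"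
      by (simp add: Aq_def A_def Re_sum Im_sum scaleR_sum_left sum.distrib scaleR_add_right)
    then show ?thesis
      using z(2) by simp
  qed
  then have "typeA \<alpha> \<beta> \<gamma> A q"
    by (simp add: typeA_def q_def)
  ultimately show ?thesis
    using typeA_imp_equilibrium[OF assms(2,3)] by blast
qed

lemma equilibrium_exists:
  fixes \<beta> :: "real^'m" and \<gamma> :: "real^'n"
  assumes "CARD('m) \<ge> 2" "\<alpha> > 0" "\<forall>i. \<gamma> $ i > 0" "norm \<beta> = 1"
  shows "\<exists>(A :: (real^'m)^'n) q. equilibrium \<alpha> \<beta> \<gamma> A q \<and>
    (typeA \<alpha> \<beta> \<gamma> A q \<or> typeB \<beta> A \<or> typeC \<beta> \<gamma> A)"
proof -
  let ?L = "\<Sum>i\<in>UNIV. \<gamma> $ i"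
  consider "?L \<le> 2 + \<alpha>" | k where "2 + \<alpha> \<le> 2 * \<gamma> $ k - ?L"
    | "2 + \<alpha> \<le> ?L" "\<forall>k. 2 * \<gamma> $ k - ?L \<le> 2 + \<alpha>"
    by (meson linorder_le_cases)
  then show ?thesis
  proof cases
    case 1
    then show ?thesis
      using concentration_equilibrium_exists[OF assms(2-4)] by blast
  next
    case 2
    then show ?thesis
      using polarization_equilibrium_exists[OF assms(2-4)] by blast
  next
    case 3
    then show ?thesis
      using typeA_equilibrium_exists[OF assms] by blast
  qed
qed

lemma equilibrium_classification:
  fixes \<beta> :: "real^'m" and \<gamma> q :: "real^'n"
  assumes "\<alpha> > 0" "\<forall>i. \<gamma> $ i > 0" "norm \<beta> = 1" "equilibrium \<alpha> \<beta> \<gamma> A q"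
  shows "typeA \<alpha> \<beta> \<gamma> A q \<or>
    (\<exists>\<sigma> :: real^'n. (\<forall>i. \<sigma> $ i = -1 \<or> \<sigma> $ i = 1) \<and> (\<forall>i. A $ i = \<sigma> $ i *\<^sub>R \<beta>) \<and>
       sign_profile_stable \<alpha> \<gamma> \<sigma> \<and>
       q = (1 / (2 + \<alpha>)) *\<^sub>R \<gamma>
           - (\<alpha> * (\<sigma> \<bullet> \<gamma> - (2 + \<alpha>)) / ((2 + \<alpha>) * (2 + (real CARD('n) + 1) * \<alpha>))) *\<^sub>R \<sigma>)"
proof (cases "typeA \<alpha> \<beta> \<gamma> A q")
  case False
  then have "\<forall>i. A $ i = \<beta> \<or> A $ i = - \<beta>"
    using equilibrium_typeA_or_sign_profile[OF assms] by blast
  then obtain \<sigma> :: "real^'n" where sign: "\<forall>i. \<sigma> $ i = -1 \<or> \<sigma> $ i = 1"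
    and A: "\<forall>i. A $ i = \<sigma> $ i *\<^sub>R \<beta>"
    by (intro that[of "\<chi> i. if A $ i = \<beta> then 1 else -1"]) auto
  then show ?thesis
    using equilibrium_sign_profile_iff[OF assms(1-3) sign A] assms(4) by blast
qed simp

theorem theorem1:
  fixes \<alpha> :: real and \<beta> :: "real^'m" and \<gamma> :: "real^'n"
  assumes n2: "CARD('n) \<ge> 2" and m2: "CARD('m) \<ge> 2"
    and alpha: "\<alpha> > 0" and beta: "norm \<beta> = 1"
    and gamma: "\<forall>i. \<gamma> $ i > 0"
  shows "(\<exists>(A :: (real^'m)^'n) q. equilibrium \<alpha> \<beta> \<gamma> A q \<and>
            (typeA \<alpha> \<beta> \<gamma> A q \<or> typeB \<beta> A \<or> typeC \<beta> \<gamma> A))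
    \<and> (\<forall>(A :: (real^'m)^'n) q. equilibrium \<alpha> \<beta> \<gamma> A q \<longrightarrow>
          typeA \<alpha> \<beta> \<gamma> A q \<or>
          (\<exists>\<sigma> :: real^'n. (\<forall>i. \<sigma> $ i = -1 \<or> \<sigma> $ i = 1) \<and>
             (\<forall>i. A $ i = (\<sigma> $ i) *\<^sub>R \<beta>) \<and>
             (\<forall>j. \<sigma> $ j = -1 \<longrightarrow>
                (2 + \<alpha>) - (2 + (real CARD('n) + 1) * \<alpha>) / (2 * (1 + \<alpha>)) * \<gamma> $ j \<le> \<sigma> \<bullet> \<gamma>) \<and>
             (\<forall>j. \<sigma> $ j = 1 \<longrightarrow>
                \<sigma> \<bullet> \<gamma> \<le> (2 + \<alpha>) + (2 + (real CARD('n) + 1) * \<alpha>) / (2 * (1 + \<alpha>)) * \<gamma> $ j) \<and>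
             q = (1 / (2 + \<alpha>)) *\<^sub>R \<gamma>
                 - (\<alpha> * (\<sigma> \<bullet> \<gamma> - (2 + \<alpha>)) / ((2 + \<alpha>) * (2 + (real CARD('n) + 1) * \<alpha>))) *\<^sub>R \<sigma>))"
proof -
  show ?thesis
    using equilibrium_exists[OF m2 alpha gamma beta] equilibrium_classification[OF alpha gamma beta]
    unfolding sign_profile_stable_def by blast
qed

end
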